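(* Let $n\ge k\ge1$ and let $Y\in\mathbb{F}_2^{N_k}$ be fixed with $Y_\emptyset=1$. Let $\ell=(\ell_1,\dots,\ell_k)$ be a uniformly random $k$-tuple of linearly independent linear forms on $\mathbb{F}_2^n$ and, independently, $\varepsilon\in\mathbb{F}_2^k$ uniformly random; set $\alpha_i=1-\varepsilon_i$. Then $$\mathbf{P}\big(\mathcal{L}_{\ell,\alpha}(Y)=0\big)\le 1-2^{-k}.$$
   Context: Let $N_k=\sum_{i=0}^k\binom{n}{i}$ and index the coordinates of $\mathbb{F}_2^{N_k}$ by subsets $S\subseteq[n]$ with $|S|\le k$. For linear forms $\ell_1,\dots,\ell_k$ on $\mathbb{F}_2^n$ (with $\ell_i(x)=\sum_s a_{i,s}x_s$) and $\alpha\in\mathbb{F}_2^k$, expand the polynomial $P_{\ell,\alpha}(x)=\prod_{i=1}^k(\ell_i(x)+\alpha_i)$ in $\mathbb{F}_2[x_1,\dots,x_n]$ and reduce using $x_s^2=x_s$, obtaining the multilinear polynomial $\sum_{S\subseteq[n],|S|\le k}c_S(\ell,\alpha)\prod_{s\in S}x_s$ (the coefficients $c_S(\ell,\alpha)\in\mathbb{F}_2$ are thereby defined; $c_\emptyset$ is the constant term). Define the linear form $\mathcal{L}_{\ell,\alpha}(Y)=\sum_{|S|\le k}c_S(\ell,\alpha)Y_S$ on $\mathbb{F}_2^{N_k}$. *)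

theory Defs
  imports Complex_Main "HOL-Library.FuncSet"
begin

text \<open>F_2 is modelled by bool (True = 1). A k-tuple of linear forms on F_2^n is a
 coefficient matrix a :: nat \<Rightarrow> nat \<Rightarrow> bool, a i s = a_{i,s} for i < k, s < n
 (False outside). A vector in F_2^k is a function nat \<Rightarrow> bool (False outside {0..<k}).\<close>

definition forms :: "nat \<Rightarrow> nat \<Rightarrow> (nat \<Rightarrow> nat \<Rightarrow> bool) set" where
  "forms n k = {a. \<forall>i s. (k \<le> i \<or> n \<le> s) \<longrightarrow> \<not> a i s}"

definition lin_indep_forms :: "nat \<Rightarrow> nat \<Rightarrow> (nat \<Rightarrow> nat \<Rightarrow> bool) \<Rightarrow> bool" where
  "lin_indep_forms n k a \<longleftrightarrow>
     (\<forall>I. I \<subseteq> {0..<k} \<and> I \<noteq> {} \<longrightarrow> (\<exists>s<n. odd (card {i\<in>I. a i s})))"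

definition bvecs :: "nat \<Rightarrow> (nat \<Rightarrow> bool) set" where
  "bvecs k = {e. \<forall>i. k \<le> i \<longrightarrow> \<not> e i}"

text \<open>Coefficient c_S(l,alpha) of the multilinear reduction of prod_i (l_i(x) + alpha_i):
 expanding the product, each term chooses for every factor i either the constant alpha_i
 (None) or a variable x_s with a_{i,s} = 1 (Some s); after x_s^2 = x_s the term is the
 monomial on the set of chosen variables. c_S is the parity of the number of terms
 giving monomial S.\<close>
definition coeffS :: "nat \<Rightarrow> nat \<Rightarrow> (nat \<Rightarrow> nat \<Rightarrow> bool) \<Rightarrow> (nat \<Rightarrow> bool) \<Rightarrow> nat set \<Rightarrow> bool" where
  "coeffS n k a alpha S = odd (card {f \<in> {0..<k} \<rightarrow>\<^sub>E insert None (Some ` {0..<n}).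
      (\<forall>i<k. (case f i of None \<Rightarrow> alpha i | Some s \<Rightarrow> a i s))
      \<and> {s. \<exists>i<k. f i = Some s} = S})"

definition Lform :: "nat \<Rightarrow> nat \<Rightarrow> (nat \<Rightarrow> nat \<Rightarrow> bool) \<Rightarrow> (nat \<Rightarrow> bool) \<Rightarrow> (nat set \<Rightarrow> bool) \<Rightarrow> bool" where
  "Lform n k a alpha Y = odd (card {S. S \<subseteq> {0..<n} \<and> card S \<le> k \<and> coeffS n k a alpha S \<and> Y S})"

end

theory Submission
  imports Defs
begin

text \<open>Summing the product \<open>\<Prod>\<^sub>i (\<ell>\<^sub>i(x) + \<alpha>\<^sub>i)\<close> over all \<open>\<alpha> \<in> \<bbbF>\<^sub>2\<^sup>k\<close> gives the constant
  polynomial 1, since each factor sums to \<open>(\<ell>\<^sub>i(x) + 0) + (\<ell>\<^sub>i(x) + 1) = 1\<close>. Hence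
  \<open>\<Sum>\<^sub>\<alpha> c\<^sub>S(\<ell>,\<alpha>)\<close> is 1 for \<open>S = \<emptyset>\<close> and 0 otherwise, and \<open>\<Sum>\<^sub>\<alpha> \<L>\<^sub>\<ell>\<^sub>,\<^sub>\<alpha>(Y) = Y\<^sub>\<emptyset> = 1\<close>.
  So for every \<open>\<ell>\<close> some \<open>\<alpha>\<close> has \<open>\<L>\<^sub>\<ell>\<^sub>,\<^sub>\<alpha>(Y) = 1\<close>,
  i.e. at most \<open>2\<^sup>k - 1\<close> of the \<open>2\<^sup>k\<close> choices of \<open>\<epsilon>\<close> are bad.\<close>

lemma even_card_involution:
  assumes "finite A" "\<And>x. x \<in> A \<Longrightarrow> g x \<in> A" "\<And>x. x \<in> A \<Longrightarrow> g x \<noteq> x"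
    "\<And>x. x \<in> A \<Longrightarrow> g (g x) = x"
  shows "even (card A)"
  using assms
proof (induction "card A" arbitrary: A rule: less_induct)
  case less
  show ?case
  proof (cases "A = {}")
    case False
    then obtain x where x: "x \<in> A" by blast
    let ?B = "A - {x, g x}"
    have pair: "{x, g x} \<subseteq> A" "card {x, g x} = 2"
      using x less.prems(2,3)[OF x] by auto
    then have card_A: "card A = card ?B + 2"
      using card_Diff_subset[OF _ pair(1)] card_mono[OF less.prems(1) pair(1)] by simp
    have "even (card ?B)"
    proof (rule less.hyps)
      fix y assume y: "y \<in> ?B"
      show "g y \<noteq> y" "g (g y) = y" using y less.prems by auto
      have "g y \<in> A" "g y \<noteq> x" "g y \<noteq> g x"
        using y less.prems x by (auto, metis)
      then show "g y \<in> ?B" by simp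
    qed (use card_A less.prems in auto)
    with card_A show ?thesis by simp
  qed simp
qed

lemma bij_betw_bvecs_Pow: "bij_betw (\<lambda>e. {i. e i}) (bvecs k) (Pow {0..<k})"
proof (rule bij_betw_imageI)
  show "inj_on (\<lambda>e. {i. e i}) (bvecs k)"
    by (rule inj_onI) (simp add: set_eq_iff fun_eq_iff)
  have "X = {i. (\<lambda>i. i \<in> X) i} \<and> (\<lambda>i. i \<in> X) \<in> bvecs k" if "X \<subseteq> {0..<k}" for X
    using that unfolding bvecs_def by auto
  then show "(\<lambda>e. {i. e i}) ` bvecs k = Pow {0..<k}"
    unfolding bvecs_def by (auto simp: not_le[symmetric])
qed

lemma finite_bvecs: "finite (bvecs k)"
  using bij_betw_finite[OF bij_betw_bvecs_Pow] by simp

lemma card_bvecs: "card (bvecs k) = 2 ^ k"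
  using bij_betw_same_card[OF bij_betw_bvecs_Pow] by (simp add: card_Pow)

lemma card_bvecs_complement:
  "card {e \<in> bvecs k. P (\<lambda>i. i < k \<and> \<not> e i)} = card {\<alpha> \<in> bvecs k. P \<alpha>}"
proof -
  let ?c = "\<lambda>e i. i < k \<and> \<not> e i"
  have inv: "?c (?c e) = e" if "e \<in> bvecs k" for e
    using that unfolding bvecs_def by (auto simp: fun_eq_iff not_le[symmetric])
  have closed: "?c e \<in> bvecs k" for e
    by (simp add: bvecs_def)
  have "bij_betw ?c {e \<in> bvecs k. P (?c e)} {\<alpha> \<in> bvecs k. P \<alpha>}"
    by (rule bij_betwI[where g = ?c]) (auto simp: closed inv[simplified])
  then show ?thesis by (rule bij_betw_same_card)
qed

definition expansion_terms ::
    "nat \<Rightarrow> nat \<Rightarrow> (nat \<Rightarrow> nat \<Rightarrow> bool) \<Rightarrow> (nat \<Rightarrow> bool) \<Rightarrow> nat set \<Rightarrow> (nat \<Rightarrow> nat option) set" where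
  "expansion_terms n k a \<alpha> S = {f \<in> {0..<k} \<rightarrow>\<^sub>E insert None (Some ` {0..<n}).
      (\<forall>i<k. (case f i of None \<Rightarrow> \<alpha> i | Some s \<Rightarrow> a i s)) \<and> {s. \<exists>i<k. f i = Some s} = S}"

lemma coeffS_eq_odd_card_expansion_terms:
  "coeffS n k a \<alpha> S = odd (card (expansion_terms n k a \<alpha> S))"
  by (simp add: coeffS_def expansion_terms_def)

lemma finite_expansion_terms: "finite (expansion_terms n k a \<alpha> S)"
  by (rule finite_subset[of _ "{0..<k} \<rightarrow>\<^sub>E insert None (Some ` {0..<n})"])
    (auto simp: expansion_terms_def intro: finite_PiE)

text \<open>Toggling \<open>\<alpha>\<close> at the first factor from which a term picks a variable does not change the
  term, so this pairs up the terms of all the products.\<close>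
lemma even_card_Sigma_expansion_terms:
  assumes "S \<noteq> {}"
  shows "even (card (SIGMA \<alpha>:bvecs k. expansion_terms n k a \<alpha> S))"
proof -
  define first where "first f = (LEAST i. i < k \<and> f i \<noteq> None)" for f :: "nat \<Rightarrow> nat option"
  define toggle where "toggle p = (case p of (\<alpha>, f) \<Rightarrow> (\<alpha>(first f := \<not> \<alpha> (first f)), f))"
    for p :: "(nat \<Rightarrow> bool) \<times> (nat \<Rightarrow> nat option)"
  have first: "first f < k \<and> f (first f) \<noteq> None" if "f \<in> expansion_terms n k a \<alpha> S" for \<alpha> f
  proof -
    from assms that obtain i where "i < k \<and> f i \<noteq> None"
      unfolding expansion_terms_def by auto
    then show ?thesis unfolding first_def by (rule LeastI)
  qed
  show ?thesis
  proof (rule even_card_involution[where g = toggle])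
    show "finite (SIGMA \<alpha>:bvecs k. expansion_terms n k a \<alpha> S)"
      using finite_bvecs finite_expansion_terms by blast
  next
    fix p assume "p \<in> (SIGMA \<alpha>:bvecs k. expansion_terms n k a \<alpha> S)"
    then obtain \<alpha> f where p: "p = (\<alpha>, f)" "\<alpha> \<in> bvecs k" "f \<in> expansion_terms n k a \<alpha> S"
      by auto
    note first = first[OF p(3)]
    show "toggle p \<noteq> p" "toggle (toggle p) = p"
      using p by (auto simp: toggle_def fun_eq_iff)
    have "(case f i of None \<Rightarrow> (\<alpha>(first f := \<not> \<alpha> (first f))) i | Some s \<Rightarrow> a i s)
        = (case f i of None \<Rightarrow> \<alpha> i | Some s \<Rightarrow> a i s)" for i
      using first by (cases "f i") auto
    then have "f \<in> expansion_terms n k a (\<alpha>(first f := \<not> \<alpha> (first f))) S"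
      using p(3) unfolding expansion_terms_def by simp
    moreover have "\<alpha>(first f := \<not> \<alpha> (first f)) \<in> bvecs k"
      using p(2) first unfolding bvecs_def by auto
    ultimately show "toggle p \<in> (SIGMA \<alpha>:bvecs k. expansion_terms n k a \<alpha> S)"
      using p by (simp add: toggle_def)
  qed
qed

lemma expansion_terms_empty:
  "expansion_terms n k a \<alpha> {} = (if \<forall>i<k. \<alpha> i then {\<lambda>i. if i < k then None else undefined} else {})"
  by (auto simp: expansion_terms_def PiE_def extensional_def fun_eq_iff split: option.splits)
    (metis option.exhaust)+

lemma odd_card_coeffS_iff:
  "odd (card {\<alpha> \<in> bvecs k. coeffS n k a \<alpha> S}) \<longleftrightarrow> S = {}"
proof (cases "S = {}")
  case True
  have "{\<alpha> \<in> bvecs k. coeffS n k a \<alpha> {}} = {\<lambda>i. i < k}"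
    by (auto simp: coeffS_eq_odd_card_expansion_terms expansion_terms_empty bvecs_def
        fun_eq_iff not_le[symmetric])
  with True show ?thesis by simp
next
  case False
  have "even (\<Sum>\<alpha>\<in>bvecs k. card (expansion_terms n k a \<alpha> S))"
    using even_card_Sigma_expansion_terms[OF False] finite_bvecs finite_expansion_terms
    by (simp add: card_SigmaI)
  with False show ?thesis
    by (simp add: even_sum_iff finite_bvecs coeffS_eq_odd_card_expansion_terms)
qed

lemma odd_card_Lform:
  assumes "Y {}"
  shows "odd (card {\<alpha> \<in> bvecs k. Lform n k a \<alpha> Y})"
proof -
  define SS where "SS = {S. S \<subseteq> {0..<n} \<and> card S \<le> k \<and> Y S}"
  have "finite SS" unfolding SS_def by (rule finite_subset[of _ "Pow {0..<n}"]) auto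
  have Lform_eq: "Lform n k a \<alpha> Y = odd (card {S \<in> SS. coeffS n k a \<alpha> S})" for \<alpha>
    unfolding Lform_def SS_def by (simp add: conj_ac)
  have "(\<Sum>\<alpha>\<in>bvecs k. card {S \<in> SS. coeffS n k a \<alpha> S})
      = (\<Sum>S\<in>SS. card {\<alpha> \<in> bvecs k. coeffS n k a \<alpha> S})"
    using sum.swap[where g = "\<lambda>\<alpha> S. of_bool (coeffS n k a \<alpha> S) :: nat" and A = "bvecs k" and B = SS]
      \<open>finite SS\<close> finite_bvecs by (simp add: Int_def)
  moreover have "{S \<in> SS. odd (card {\<alpha> \<in> bvecs k. coeffS n k a \<alpha> S})} = {{}}"
    using assms by (auto simp: odd_card_coeffS_iff SS_def)
  ultimately have "odd (\<Sum>\<alpha>\<in>bvecs k. card {S \<in> SS. coeffS n k a \<alpha> S})"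
    using \<open>finite SS\<close> by (simp add: even_sum_iff)
  then show ?thesis
    using finite_bvecs by (simp add: even_sum_iff Lform_eq)
qed

lemma card_Sigma_proper_subsets_ratio:
  assumes "finite C" "\<And>x. x \<in> A \<Longrightarrow> B x \<subset> C"
  shows "real (card (Sigma A B)) / real (card (A \<times> C)) \<le> 1 - 1 / real (card C)"
proof (cases "finite A \<and> A \<noteq> {}")
  case True
  then have "card A > 0" "card C > 0"
    using assms card_gt_0_iff by fastforce+
  have "card (Sigma A B) = (\<Sum>x\<in>A. card (B x))"
    using True assms by (intro card_SigmaI) (auto dest: rev_finite_subset[OF assms(1)])
  also have "\<dots> \<le> (\<Sum>x\<in>A. card C - 1)"
    using psubset_card_mono[OF assms(1) assms(2)] by (intro sum_mono) fastforce
  finally have "real (card (Sigma A B)) \<le> real (card A * (card C - 1))"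
    by (intro of_nat_mono) simp
  also have "\<dots> = real (card A) * (real (card C) - 1)"
    using \<open>card C > 0\<close> by (simp add: of_nat_diff)
  finally have "real (card (Sigma A B)) / real (card (A \<times> C))
      \<le> real (card A) * (real (card C) - 1) / (real (card A) * real (card C))"
    unfolding card_cartesian_product of_nat_mult by (rule divide_right_mono) simp
  also have "\<dots> = 1 - 1 / real (card C)"
    using \<open>card A > 0\<close> \<open>card C > 0\<close> by (simp add: diff_divide_distrib)
  finally show ?thesis .
qed (auto simp: card_cartesian_product divide_le_eq_1)

theorem mainTheorem6:
  fixes n k :: nat and Y :: "nat set \<Rightarrow> bool"
  assumes "1 \<le> k" and "k \<le> n" and "Y {}"
  defines "\<Omega> \<equiv> {a \<in> forms n k. lin_indep_forms n k a} \<times> bvecs k"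
  shows "real (card {(a, \<epsilon>) \<in> \<Omega>. \<not> Lform n k a (\<lambda>i. i < k \<and> \<not> \<epsilon> i) Y})
           / real (card \<Omega>) \<le> 1 - 1 / 2 ^ k"
proof -
  define Bad where "Bad a = {\<epsilon> \<in> bvecs k. \<not> Lform n k a (\<lambda>i. i < k \<and> \<not> \<epsilon> i) Y}" for a
  have "Bad a \<subset> bvecs k" for a
  proof -
    have "odd (card {\<epsilon> \<in> bvecs k. Lform n k a (\<lambda>i. i < k \<and> \<not> \<epsilon> i) Y})"
      using odd_card_Lform[where Y = Y and n = n and k = k and a = a, OF \<open>Y {}\<close>]
        card_bvecs_complement[where P = "\<lambda>\<alpha>. Lform n k a \<alpha> Y"] by simp
    then obtain \<epsilon> where "\<epsilon> \<in> bvecs k" "Lform n k a (\<lambda>i. i < k \<and> \<not> \<epsilon> i) Y"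
      by (auto simp: card_gt_0_iff dest!: odd_pos)
    then show ?thesis unfolding Bad_def by blast
  qed
  then have "real (card (Sigma {a \<in> forms n k. lin_indep_forms n k a} Bad)) / real (card \<Omega>)
      \<le> 1 - 1 / 2 ^ k"
    using card_Sigma_proper_subsets_ratio[OF finite_bvecs, of _ Bad] by (simp add: \<Omega>_def card_bvecs)
  moreover have "{(a, \<epsilon>) \<in> \<Omega>. \<not> Lform n k a (\<lambda>i. i < k \<and> \<not> \<epsilon> i) Y}
      = Sigma {a \<in> forms n k. lin_indep_forms n k a} Bad"
    unfolding \<Omega>_def Bad_def by auto
  ultimately show ?thesis by simp
qed

end
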